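(* Let $f:\mathbb{C}^n\to\mathbb{R}\cup\{+\infty\}$ be a proper closed convex function (with $\mathbb{C}^n$ viewed as the real Euclidean space $\mathbb{R}^{2n}$ with inner product $\mathrm{Re}\,\mathbf{a}^\dagger\mathbf{b}$), let $\mathbf{D}\in\mathbb{C}^{m\times n}$, $\mathbf{b}\in\mathbb{C}^m$, and consider the problem $\min_{\mathbf{u}\in\mathbb{C}^n} f(\mathbf{u})$ s.t. $\mathbf{D}\mathbf{u}=\mathbf{b}$. Assume this problem admits a KKT pair, i.e. there exist $\mathbf{u}^\star\in\mathbb{C}^n$, $\bm\lambda^\star\in\mathbb{C}^m$ with $\mathbf{D}\mathbf{u}^\star=\mathbf{b}$ and $\mathbf{0}\in\partial f(\mathbf{u}^\star)+\mathbf{D}^\dagger\bm\lambda^\star$. Let $\{\omega_t\}_{t\ge 0}\subset(0,1]$ satisfy $\omega_0=1$ and $\sum_{t=0}^{\infty}\omega_t<+\infty$. Then, for any initial data $\mathbf{u}^0\in\mathbb{C}^n$, $\bm\lambda^0\in\mathbb{C}^m$, $\tau_{-1}>0$, $\theta>0$, $0<\underline{\eta}<\overline{\eta}$, the sequence $\{\mathbf{u}^t\}$ generated by the ABAL method (defined in the context) converges to an optimal solution $\mathbf{u}^*$ of the problem $\min f(\mathbf{u})$ s.t. $\mathbf{D}\mathbf{u}=\mathbf{b}$.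
   Context: For $\tau>0$, $\mathrm{prox}_{\tau f}(\mathbf{v}):=\arg\min_{\mathbf{u}\in\mathbb{C}^n}\{f(\mathbf{u})+\frac{1}{2\tau}\|\mathbf{u}-\mathbf{v}\|^2\}$. For real $a<c$, $\mathrm{proj}_{[a,c]}(s)=\min\{\max\{s,a\},c\}$ (with $\mathrm{proj}_{[a,c]}(+\infty)=c$). The ABAL method, given $\mathbf{u}^0,\bm\lambda^0,\{\omega_t\}$, an initial stepsize $\tau_{-1}>0$, $\theta>0$ and $0<\underline{\eta}<\overline{\eta}$, generates for $t=0,1,2,\dots$: $\widetilde{\mathbf{u}}^t=\mathbf{u}^t-\tau_{t-1}\mathbf{D}^\dagger\bm\lambda^t$, $\mathbf{u}^{t+1}=\mathrm{prox}_{\tau_{t-1}f}(\widetilde{\mathbf{u}}^t)$; $\eta_t=\mathrm{proj}_{[\underline{\eta},\overline{\eta}]}\big(\|\mathbf{u}^{t+1}\|/\|(\mathbf{u}^{t+1}-\widetilde{\mathbf{u}}^t;\ \theta\tau_{t-1}\bm\lambda^t)\|\big)$, where $(\mathbf{a};\mathbf{c})$ denotes the stacked vector and the ratio is interpreted as $+\infty$ if its denominator is zero and its numerator is positive, and as $0$ if the numerator is zero; $\kappa_t=1-\omega_t+\omega_t\eta_t$, $\tau_t=\kappa_t\tau_{t-1}$; $\mathbf{p}^{t+1}=\mathbf{D}\big(\mathbf{u}^{t+1}+\kappa_t(\mathbf{u}^{t+1}-\mathbf{u}^t)\big)-\mathbf{b}$; $\bm\lambda^{t+1}=\bm\lambda^t+\tau_t^{-1}(\mathbf{D}\mathbf{D}^\dagger+\theta^2\mathbf{I})^{-1}\mathbf{p}^{t+1}$.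 Here $\mathbf{D}^\dagger$ is the conjugate transpose and $\|\cdot\|$ the Euclidean norm. *)

theory Defs
  imports "HOL-Analysis.Analysis"
begin

text \<open>Complex vectors in C^n are modelled as complex ^ 'n; the real inner product
  of HOL-Analysis on this type is exactly Re (a^dagger b), and norm is the Euclidean norm.\<close>

definition cadj :: "complex ^ 'n ^ 'm \<Rightarrow> complex ^ 'm ^ 'n" where
  "cadj D = (\<chi> i j. cnj (D $ j $ i))"

definition proper_fun :: "('a \<Rightarrow> ereal) \<Rightarrow> bool" where
  "proper_fun f \<longleftrightarrow> (\<forall>u. f u \<noteq> -\<infinity>) \<and> (\<exists>u. f u < \<infinity>)"

definition convex_fun :: "('a::real_vector \<Rightarrow> ereal) \<Rightarrow> bool" where
  "convex_fun f \<longleftrightarrow> (\<forall>x y a. 0 \<le> a \<and> a \<le> 1 \<longrightarrow>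
      f (a *\<^sub>R x + (1 - a) *\<^sub>R y) \<le> ereal a * f x + ereal (1 - a) * f y)"

definition closed_fun :: "('a::topological_space \<Rightarrow> ereal) \<Rightarrow> bool" where
  "closed_fun f \<longleftrightarrow> closed {(u, r::real). f u \<le> ereal r}"

definition subdiff :: "('a::real_inner \<Rightarrow> ereal) \<Rightarrow> 'a \<Rightarrow> 'a set" where
  "subdiff f u = {g. f u < \<infinity> \<and> (\<forall>v. f v \<ge> f u + ereal (g \<bullet> (v - u)))}"

definition prox :: "real \<Rightarrow> ('a::real_normed_vector \<Rightarrow> ereal) \<Rightarrow> 'a \<Rightarrow> 'a" where
  "prox \<tau> f v = (THE u. \<forall>w. f u + ereal (norm (u - v) ^ 2 / (2 * \<tau>))
                           \<le> f w + ereal (norm (w - v) ^ 2 / (2 * \<tau>)))"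

text \<open>proj_[a,c] of the ratio num/den, with num/den read as +infinity if den = 0 < num,
  and as 0 if num = 0.\<close>
definition proj_ratio :: "real \<Rightarrow> real \<Rightarrow> real \<Rightarrow> real \<Rightarrow> real" where
  "proj_ratio a c num den =
     (if num = 0 then min (max 0 a) c
      else if den = 0 then c
      else min (max (num / den) a) c)"

end

theory Submission
  imports Defs
begin

text \<open>
  Write \<open>A = D\<^sup>\<dagger>\<close>. For a KKT pair \<open>(u\<^sup>*, \<lambda>\<^sup>*)\<close> consider the energy
  \<open>E\<^sub>t = \<parallel>u\<^sup>t - u\<^sup>* - \<tau>\<^sub>t\<^sub>-\<^sub>1 A(\<lambda>\<^sup>t - \<lambda>\<^sup>*)\<parallel>\<^sup>2 + (\<tau>\<^sub>t\<^sub>-\<^sub>1\<theta>)\<^sup>2\<parallel>\<lambda>\<^sup>t - \<lambda>\<^sup>*\<parallel>\<^sup>2\<close>.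
  The prox step makes \<open>(\<widetilde>u\<^sup>t - u\<^sup>t\<^sup>+\<^sup>1)/\<tau>\<^sub>t\<^sub>-\<^sub>1\<close> a subgradient of \<open>f\<close> at \<open>u\<^sup>t\<^sup>+\<^sup>1\<close>, and the dual
  update says \<open>\<tau>\<^sub>t(DA + \<theta>\<^sup>2I)(\<lambda>\<^sup>t\<^sup>+\<^sup>1 - \<lambda>\<^sup>t) = p\<^sup>t\<^sup>+\<^sup>1\<close>. Monotonicity of \<open>\<partial>f\<close> then
  gives \<open>E\<^sub>t\<^sub>+\<^sub>1 \<le> (1 + \<epsilon>\<^sub>t)E\<^sub>t - \<rho>\<^sub>t\<close>, where \<open>\<rho>\<^sub>t\<close> is the same energy of the increments
  and \<open>\<epsilon>\<^sub>t = O(\<bar>\<kappa>\<^sub>t\<^sup>2 - 1\<bar>) = O(\<omega>\<^sub>t)\<close> is summable; summability of \<open>\<omega>\<close> also keeps the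
  stepsizes \<open>\<tau>\<^sub>t = \<tau>\<^sub>-\<^sub>1 \<Prod> \<kappa>\<^sub>s\<close> between two positive constants. Hence \<open>E\<^sub>t\<close> stays
  bounded and \<open>\<rho>\<^sub>t \<rightarrow> 0\<close>, so the iterates are bounded with vanishing increments, and every
  cluster point \<open>(\<hat>u, \<hat>\<lambda>)\<close> is again a KKT pair (closedness of the graph of \<open>\<partial>f\<close>).
  Applying the same quasi-Fejer inequality to \<open>(\<hat>u, \<hat>\<lambda>)\<close>, the energy tends to \<open>0\<close>
  along a subsequence and hence along the whole sequence, so \<open>u\<^sup>t \<rightarrow> \<hat>u\<close>.
\<close>

section \<open>Complex matrices and the adjoint\<close>

lemma inner_matrix_vector_mult_cadj:
  "inner ((D::complex^'n^'m) *v x) y = inner x (cadj D *v y)"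
proof -
  have inner_Re: "inner a b = Re (a * cnj b)" for a b :: complex
    by (simp add: inner_complex_def)
  have "inner (D *v x) y = Re (\<Sum>j\<in>UNIV. \<Sum>i\<in>UNIV. D$j$i * x$i * cnj (y$j))"
    by (simp add: inner_vec_def inner_Re matrix_vector_mult_def sum_distrib_right Re_sum)
  also have "\<dots> = Re (\<Sum>i\<in>UNIV. \<Sum>j\<in>UNIV. x$i * (D$j$i * cnj (y$j)))"
    by (subst sum.swap) (simp add: algebra_simps)
  also have "\<dots> = inner x (cadj D *v y)"
    by (simp add: inner_vec_def inner_Re matrix_vector_mult_def cadj_def sum_distrib_left Re_sum)
  finally show ?thesis .
qed

lemma bounded_linear_matrix_vector_mult: "bounded_linear (\<lambda>x. (D::complex^'n^'m) *v x)"
  by (simp add: linear_conv_bounded_linear[symmetric])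

lemma matrix_vector_mult_scaleR_complex: "(D::complex^'n^'m) *v (c *\<^sub>R x) = c *\<^sub>R (D *v x)"
  using linear_scale[OF matrix_vector_mul_linear] .

lemma norm_matrix_vector_mult_le: "norm ((D::complex^'n^'m) *v x) \<le> onorm (\<lambda>x. D *v x) * norm x"
  by (rule onorm[OF bounded_linear_matrix_vector_mult])

lemma matrix_vector_mult_regularized_gram:
  "((D::complex^'n^'m) ** cadj D + of_real c *\<^sub>R mat 1) *v y = D *v (cadj D *v y) + c *\<^sub>R y"
proof -
  have "(of_real c *\<^sub>R mat 1 :: complex^'m^'m) *v y = c *\<^sub>R y"
  proof -
    have "((of_real c *\<^sub>R mat 1 :: complex^'m^'m) $ i $ j) * y $ j = (if i = j then c *\<^sub>R y $ j else 0)" for i j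
      by (simp add: mat_def)
    then show ?thesis by (simp add: vec_eq_iff matrix_vector_mult_def sum.delta)
  qed
  then show ?thesis by (simp add: matrix_vector_mult_add_rdistrib matrix_vector_mul_assoc)
qed

lemma regularized_gram_inverse:
  assumes "c > 0"
  shows "((D::complex^'n^'m) ** cadj D + of_real c *\<^sub>R mat 1) *v
     (matrix_inv (D ** cadj D + of_real c *\<^sub>R mat 1) *v p) = p"
proof -
  let ?M = "(D::complex^'n^'m) ** cadj D + of_real c *\<^sub>R mat 1"
  have "x = 0" if "?M *v x = 0" for x
  proof -
    have "(norm (cadj D *v x))\<^sup>2 + c * (norm x)\<^sup>2 = inner (?M *v x) x"
      unfolding matrix_vector_mult_regularized_gram inner_add_left
        inner_matrix_vector_mult_cadj[of D "cadj D *v x"]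
      by (simp add: power2_norm_eq_inner)
    also have "\<dots> = 0" using that by simp
    finally have "c * (norm x)\<^sup>2 \<le> 0" using zero_le_power2[of "norm (cadj D *v x)"] by linarith
    then show "x = 0" using assms by (simp add: mult_le_0_iff)
  qed
  then have "invertible ?M"
    using matrix_left_invertible_ker invertible_left_inverse by blast
  then have "?M ** matrix_inv ?M = mat 1"
    unfolding invertible_def matrix_inv_def by (rule someI_ex[THEN conjunct1])
  then show ?thesis by (metis matrix_vector_mul_assoc matrix_vector_mul_lid)
qed

section \<open>Convex functions and subdifferentials\<close>

lemma power2_norm_diff:
  fixes x y :: "'a::real_inner"
  shows "(norm (x - y))\<^sup>2 = (norm x)\<^sup>2 - 2 * inner x y + (norm y)\<^sup>2"
  by (simp add: power2_norm_eq_inner inner_diff_left inner_diff_right inner_commute)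

lemma power2_norm_add_scaleR:
  fixes x y :: "'a::real_inner"
  shows "(norm (x + a *\<^sub>R y))\<^sup>2 = (norm x)\<^sup>2 + 2 * a * inner x y + a\<^sup>2 * (norm y)\<^sup>2"
  unfolding power2_norm_eq_inner
  by (simp add: inner_add_left inner_add_right inner_commute power2_eq_square algebra_simps)

lemma norm_midpoint_squared:
  fixes x y :: "'a::real_inner"
  shows "(norm ((1/2) *\<^sub>R x + (1/2) *\<^sub>R y))\<^sup>2 = ((norm x)\<^sup>2 + (norm y)\<^sup>2) / 2 - (norm (x - y))\<^sup>2 / 4"
  by (simp add: power2_norm_eq_inner inner_add_left inner_add_right inner_diff_left
      inner_diff_right inner_commute algebra_simps) (simp add: field_simps)

lemma proper_fun_finite:
  assumes "proper_fun f" "f x < \<infinity>"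
  obtains F where "f x = ereal F"
  using assms unfolding proper_fun_def by (cases "f x") auto

lemma subdiff_affine_minorant:
  assumes "proper_fun f" "g \<in> subdiff f x0"
  obtains c where "\<And>w. ereal (c + inner g w) \<le> f w"
proof -
  have "f x0 < \<infinity>" using assms(2) unfolding subdiff_def by simp
  then obtain F where F: "f x0 = ereal F" by (rule proper_fun_finite[OF assms(1)])
  have "f x0 + ereal (inner g (w - x0)) \<le> f w" for w
    using assms(2) unfolding subdiff_def by blast
  moreover have "F + inner g (w - x0) = (F - inner g x0) + inner g w" for w
    by (simp add: inner_diff_right)
  ultimately have "ereal ((F - inner g x0) + inner g w) \<le> f w" for w
    using F by (metis plus_ereal.simps(1))
  then show ?thesis using that by blast
qed

lemma subdiff_monotone:
  assumes "proper_fun f" "g1 \<in> subdiff f x1" "g2 \<in> subdiff f x2"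
  shows "inner (g1 - g2) (x1 - x2) \<ge> 0"
proof -
  have "f x1 < \<infinity>" "f x2 < \<infinity>" using assms(2,3) unfolding subdiff_def by simp_all
  then obtain F1 F2 where F: "f x1 = ereal F1" "f x2 = ereal F2"
    using proper_fun_finite[OF assms(1)] by metis
  have "f x1 + ereal (inner g1 (x2 - x1)) \<le> f x2" "f x2 + ereal (inner g2 (x1 - x2)) \<le> f x1"
    using assms(2,3) unfolding subdiff_def by blast+
  then have "F1 + inner g1 (x2 - x1) \<le> F2" "F2 + inner g2 (x1 - x2) \<le> F1"
    using F by simp_all
  then show ?thesis by (simp add: inner_diff_left inner_diff_right algebra_simps)
qed

lemma subdiff_closed_graph:
  fixes f :: "'a::real_inner \<Rightarrow> ereal"
  assumes proper: "proper_fun f" and closed: "closed_fun f"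
    and x: "X \<longlonglongrightarrow> x" and g: "G \<longlonglongrightarrow> g" and sub: "\<And>k. G k \<in> subdiff f (X k)"
  shows "g \<in> subdiff f x"
proof -
  have le: "f x \<le> ereal (F - inner g (v - x))" if F: "f v = ereal F" for v F
  proof -
    have "(X k, F - inner (G k) (v - X k)) \<in> {(u, s). f u \<le> ereal s}" for k
    proof -
      have "f (X k) + ereal (inner (G k) (v - X k)) \<le> ereal F"
        using sub[of k] unfolding subdiff_def F[symmetric] by blast
      moreover have "f (X k) \<noteq> -\<infinity>" using proper unfolding proper_fun_def by blast
      ultimately show ?thesis by (cases "f (X k)") simp_all
    qed
    moreover have "(\<lambda>k. (X k, F - inner (G k) (v - X k))) \<longlonglongrightarrow> (x, F - inner g (v - x))"
      by (intro tendsto_intros x g)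
    ultimately have "(x, F - inner g (v - x)) \<in> {(u, s). f u \<le> ereal s}"
      by (rule closed_sequentially[OF closed[unfolded closed_fun_def]])
    then show ?thesis by simp
  qed
  obtain w0 where "f w0 < \<infinity>" using proper unfolding proper_fun_def by blast
  then obtain F0 where "f w0 = ereal F0" by (rule proper_fun_finite[OF proper])
  then have "f x < \<infinity>" using le le_less_trans by fastforce
  then obtain Fx where Fx: "f x = ereal Fx" by (rule proper_fun_finite[OF proper])
  have "f x + ereal (inner g (v - x)) \<le> f v" for v
  proof (cases "f v")
    case (real F)
    then show ?thesis using le[OF real] Fx by simp
  qed (use proper in \<open>auto simp: proper_fun_def\<close>)
  then show ?thesis unfolding subdiff_def using \<open>f x < \<infinity>\<close> by blast
qed

lemma closed_fun_add_continuous: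
  assumes "closed_fun f" "continuous_on UNIV h"
  shows "closed_fun (\<lambda>x. f x + ereal (h x))"
proof -
  let ?g = "\<lambda>z::'a \<times> real. (fst z, snd z - h (fst z))"
  have "f x + ereal (h x) \<le> ereal r \<longleftrightarrow> f x \<le> ereal (r - h x)" for x r
    by (cases "f x") auto
  then have epi: "{(x, r). f x + ereal (h x) \<le> ereal r} = ?g -` {(x, r). f x \<le> ereal r}"
    by (simp add: set_eq_iff split_beta)
  have "continuous_on UNIV ?g"
    by (intro continuous_on_Pair continuous_on_fst continuous_on_snd continuous_on_diff
        continuous_on_compose2[OF assms(2)] continuous_on_id) auto
  then show ?thesis
    unfolding closed_fun_def epi using assms(1) unfolding closed_fun_def by (rule closed_vimage[rotated])
qed

lemma closed_fun_attains_min_coercive: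
  fixes \<phi> :: "'a::euclidean_space \<Rightarrow> ereal"
  assumes closed: "closed_fun \<phi>" and finite: "\<phi> w0 < \<infinity>" and "c > 0"
    and coercive: "\<And>w. ereal (L + c * (norm (w - v))\<^sup>2) \<le> \<phi> w"
  obtains x where "\<And>w. \<phi> x \<le> \<phi> w"
proof -
  define m where "m = Inf (range \<phi>)"
  have m_le: "m \<le> \<phi> w" for w
    unfolding m_def by (rule Inf_lower) simp
  have "ereal L \<le> m"
    unfolding m_def
  proof (rule Inf_greatest, clarify)
    fix w
    have "ereal L \<le> ereal (L + c * (norm (w - v))\<^sup>2)" using \<open>c > 0\<close> by simp
    then show "ereal L \<le> \<phi> w" using coercive[of w] by (rule order_trans)
  qed
  moreover have "m < \<infinity>"
    using m_le[of w0] finite by (rule order_le_less_trans)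
  ultimately obtain M where M: "m = ereal M" by (cases m) auto
  have "\<exists>w. \<phi> w < ereal (M + 1 / Suc k)" for k
  proof -
    have "m < ereal (M + 1 / Suc k)" using M by simp
    then show ?thesis unfolding m_def by (simp add: Inf_less_iff)
  qed
  then obtain ws where ws: "\<And>k. \<phi> (ws k) < ereal (M + 1 / Suc k)" by metis
  define R where "R = sqrt ((M + 1 - L) / c)"
  have "norm (ws k - v) \<le> R" for k
  proof -
    have "ereal (L + c * (norm (ws k - v))\<^sup>2) < ereal (M + 1 / Suc k)"
      using coercive[of "ws k"] ws[of k] by (rule order_le_less_trans)
    then have "L + c * (norm (ws k - v))\<^sup>2 < M + 1 / Suc k" by simp
    moreover have "1 / Suc k \<le> (1::real)" by simp
    ultimately have "c * (norm (ws k - v))\<^sup>2 \<le> M + 1 - L" by linarith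
    then have "(norm (ws k - v))\<^sup>2 \<le> (M + 1 - L) / c"
      using \<open>c > 0\<close> by (simp add: field_simps)
    then show ?thesis unfolding R_def by (simp add: real_le_rsqrt)
  qed
  then have "bounded (range ws)"
    by (intro bounded_subset[OF bounded_cball[of v R]]) (auto simp: dist_norm norm_minus_commute)
  then obtain x r where r: "strict_mono r" and lim: "(ws \<circ> r) \<longlonglongrightarrow> x"
    using bounded_imp_convergent_subsequence by blast
  have "(\<lambda>k. 1 / real (Suc (r k))) \<longlonglongrightarrow> 0"
    using LIMSEQ_subseq_LIMSEQ[OF LIMSEQ_inverse_real_of_nat r] by (simp add: o_def inverse_eq_divide)
  then have "(\<lambda>k. (ws (r k), M + 1 / Suc (r k))) \<longlonglongrightarrow> (x, M + 0)"
    using lim unfolding o_def by (intro tendsto_intros)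
  moreover have "(ws (r k), M + 1 / Suc (r k)) \<in> {(u, s). \<phi> u \<le> ereal s}" for k
    using ws[of "r k"] by simp
  ultimately have "(x, M + 0) \<in> {(u, s). \<phi> u \<le> ereal s}"
    by (rule closed_sequentially[OF closed[unfolded closed_fun_def], rotated])
  then have "\<phi> x \<le> m" using M by simp
  then show ?thesis using that m_le order_trans by blast
qed

section \<open>The proximal map\<close>

definition prox_objective :: "real \<Rightarrow> ('a::real_normed_vector \<Rightarrow> ereal) \<Rightarrow> 'a \<Rightarrow> 'a \<Rightarrow> ereal" where
  "prox_objective \<tau> f v w = f w + ereal ((norm (w - v))\<^sup>2 / (2 * \<tau>))"

lemma prox_objective_min_unique:
  fixes f :: "'a::real_inner \<Rightarrow> ereal"
  assumes "proper_fun f" "convex_fun f" "\<tau> > 0"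
    and min1: "\<And>w. prox_objective \<tau> f v u1 \<le> prox_objective \<tau> f v w"
    and min2: "\<And>w. prox_objective \<tau> f v u2 \<le> prox_objective \<tau> f v w"
  shows "u1 = u2"
proof -
  define q where "q w = (norm (w - v))\<^sup>2 / (2 * \<tau>)" for w
  obtain w0 where "f w0 < \<infinity>" using assms(1) unfolding proper_fun_def by auto
  then have "prox_objective \<tau> f v w0 < \<infinity>" by (simp add: prox_objective_def)
  then have "f u1 < \<infinity>" "f u2 < \<infinity>"
    using min1[of w0] min2[of w0] unfolding prox_objective_def by auto
  then obtain F1 F2 where F: "f u1 = ereal F1" "f u2 = ereal F2"
    by (metis proper_fun_finite[OF assms(1)])
  have F12: "F1 + q u1 = F2 + q u2"
    using min1[of u2] min2[of u1] F unfolding prox_objective_def q_def by simp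
  define mid where "mid = (1/2) *\<^sub>R u1 + (1 - 1/2) *\<^sub>R u2"
  have "f mid \<le> ereal (1/2) * f u1 + ereal (1 - 1/2) * f u2"
    using assms(2)[unfolded convex_fun_def, rule_format, of "1/2" u1 u2] unfolding mid_def by simp
  then have "f mid \<le> ereal ((F1 + F2) / 2)" using F by (simp add: add_divide_distrib)
  moreover have "q mid = (q u1 + q u2) / 2 - (norm (u1 - u2))\<^sup>2 / (8 * \<tau>)"
  proof -
    have "mid - v = (1/2) *\<^sub>R (u1 - v) + (1/2) *\<^sub>R (u2 - v)"
      unfolding mid_def by (simp add: algebra_simps flip: scaleR_add_left)
    then have mid: "(norm (mid - v))\<^sup>2 = ((norm (u1 - v))\<^sup>2 + (norm (u2 - v))\<^sup>2) / 2 - (norm (u1 - u2))\<^sup>2 / 4"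
      using norm_midpoint_squared[of "u1 - v" "u2 - v"] by simp
    show ?thesis unfolding q_def mid using \<open>\<tau> > 0\<close> by (simp add: field_simps)
  qed
  moreover have "ereal (F1 + q u1) \<le> f mid + ereal (q mid)"
    using min1[of mid] F unfolding prox_objective_def q_def by simp
  ultimately have "ereal (F1 + q u1) \<le> ereal ((F1 + F2) / 2 + ((q u1 + q u2) / 2 - (norm (u1 - u2))\<^sup>2 / (8 * \<tau>)))"
    by (metis add_right_mono order_trans plus_ereal.simps(1))
  then have "(norm (u1 - u2))\<^sup>2 / (8 * \<tau>) \<le> 0" using F12 by (simp add: field_simps)
  then show "u1 = u2" using \<open>\<tau> > 0\<close> by (simp add: divide_le_0_iff)
qed

text \<open>A subgradient anywhere provides the affine minorant that makes the prox objective
  coercive.\<close>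

lemma prox_minimizes:
  fixes f :: "'a::euclidean_space \<Rightarrow> ereal"
  assumes proper: "proper_fun f" and "closed_fun f" "convex_fun f" "\<tau> > 0"
    and "g0 \<in> subdiff f x0"
  shows "prox_objective \<tau> f v (prox \<tau> f v) \<le> prox_objective \<tau> f v w"
proof -
  obtain c where minorant: "\<And>w. ereal (c + inner g0 w) \<le> f w"
    using subdiff_affine_minorant[OF proper assms(5)] by blast
  define L where "L = c + inner g0 v - \<tau> * (norm g0)\<^sup>2"
  have coercive: "ereal (L + 1 / (4 * \<tau>) * (norm (w - v))\<^sup>2) \<le> prox_objective \<tau> f v w" for w
  proof -
    define r where "r = norm (w - v)"
    have "- (norm g0 * r) \<le> inner g0 (w - v)"
      using norm_cauchy_schwarz[of "-g0" "w - v"] by (simp add: r_def)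
    moreover have "norm g0 * r \<le> \<tau> * (norm g0)\<^sup>2 + r\<^sup>2 / (4 * \<tau>)"
    proof -
      have "4 * \<tau> * (norm g0 * r) \<le> 4 * \<tau> * (\<tau> * (norm g0)\<^sup>2 + r\<^sup>2 / (4 * \<tau>))"
        using \<open>\<tau> > 0\<close> zero_le_power2[of "2 * \<tau> * norm g0 - r"]
        by (simp add: power2_eq_square algebra_simps)
      then show ?thesis using \<open>\<tau> > 0\<close> by simp
    qed
    moreover have "r\<^sup>2 / (4 * \<tau>) \<le> r\<^sup>2 / (2 * \<tau>)" using \<open>\<tau> > 0\<close> by (simp add: frac_le)
    ultimately have "L + 1 / (4 * \<tau>) * r\<^sup>2 \<le> c + inner g0 w + r\<^sup>2 / (2 * \<tau>)"
      unfolding L_def by (simp add: inner_diff_right)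
    then have "ereal (L + 1 / (4 * \<tau>) * r\<^sup>2) \<le> ereal (c + inner g0 w) + ereal (r\<^sup>2 / (2 * \<tau>))"
      by simp
    also have "\<dots> \<le> prox_objective \<tau> f v w"
      unfolding prox_objective_def r_def by (rule add_right_mono[OF minorant])
    finally show ?thesis unfolding r_def .
  qed
  have "closed_fun (prox_objective \<tau> f v)"
    unfolding prox_objective_def[abs_def]
    using \<open>\<tau> > 0\<close> by (intro closed_fun_add_continuous assms continuous_intros) auto
  moreover obtain w0 where "f w0 < \<infinity>" using proper unfolding proper_fun_def by auto
  then have "prox_objective \<tau> f v w0 < \<infinity>" by (simp add: prox_objective_def)
  ultimately obtain u where "\<And>w. prox_objective \<tau> f v u \<le> prox_objective \<tau> f v w"
    using closed_fun_attains_min_coercive[OF _ _ _ coercive] \<open>\<tau> > 0\<close> by auto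
  then have "\<exists>!u. \<forall>w. prox_objective \<tau> f v u \<le> prox_objective \<tau> f v w"
    using prox_objective_min_unique[OF proper assms(3,4)] by blast
  then show ?thesis
    unfolding prox_def prox_objective_def[symmetric] by (rule theI'[THEN spec])
qed

lemma prox_in_subdiff:
  fixes f :: "'a::euclidean_space \<Rightarrow> ereal"
  assumes proper: "proper_fun f" and "closed_fun f" and convex: "convex_fun f" and "\<tau> > 0"
    and "g0 \<in> subdiff f x0"
  shows "(1 / \<tau>) *\<^sub>R (v - prox \<tau> f v) \<in> subdiff f (prox \<tau> f v)"
proof -
  define u where "u = prox \<tau> f v"
  define q where "q w = (norm (w - v))\<^sup>2 / (2 * \<tau>)" for w
  have min: "f u + ereal (q u) \<le> f w + ereal (q w)" for w
    using prox_minimizes[OF assms] unfolding prox_objective_def u_def q_def .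
  obtain w0 where "f w0 < \<infinity>" using proper unfolding proper_fun_def by auto
  then have "f w0 + ereal (q w0) < \<infinity>" by simp
  then have "f u + ereal (q u) < \<infinity>" by (rule le_less_trans[OF min])
  then have "f u < \<infinity>" by simp
  then obtain Fu where Fu: "f u = ereal Fu" by (rule proper_fun_finite[OF proper])
  have "Fu + inner ((1 / \<tau>) *\<^sub>R (v - u)) (w - u) \<le> Fw" if Fw: "f w = ereal Fw" for w Fw
  proof -
    txt \<open>Compare \<open>u\<close> with \<open>u + a(w - u)\<close> and let \<open>a \<rightarrow> 0\<^sup>+\<close>.\<close>
    define I where "I = inner (u - v) (w - u)"
    define X where "X = Fw - Fu + I / \<tau>"
    define Z where "Z = (norm (w - u))\<^sup>2 / (2 * \<tau>)"
    have "0 \<le> X + a * Z" if a: "0 < a" "a \<le> 1" for a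
    proof -
      define xa where "xa = a *\<^sub>R w + (1 - a) *\<^sub>R u"
      have "f xa \<le> ereal a * f w + ereal (1 - a) * f u"
        using convex[unfolded convex_fun_def, rule_format, of a w u] a unfolding xa_def by simp
      then have fxa: "f xa \<le> ereal (a * Fw + (1 - a) * Fu)" using Fw Fu by simp
      have "xa - v = (u - v) + a *\<^sub>R (w - u)" unfolding xa_def by (simp add: algebra_simps)
      then have "(norm (xa - v))\<^sup>2 = (norm (u - v))\<^sup>2 + 2 * a * I + a\<^sup>2 * (norm (w - u))\<^sup>2"
        unfolding I_def by (simp only: power2_norm_add_scaleR)
      then have qxa: "q xa = q u + a * (I / \<tau>) + a * (a * Z)"
        unfolding q_def Z_def using \<open>\<tau> > 0\<close> by (simp add: field_simps power2_eq_square)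
      have "ereal (Fu + q u) \<le> f xa + ereal (q xa)"
        using min[of xa] Fu by simp
      also have "\<dots> \<le> ereal (a * Fw + (1 - a) * Fu) + ereal (q xa)"
        by (rule add_right_mono[OF fxa])
      finally have "Fu + q u \<le> a * Fw + (1 - a) * Fu + q xa" by simp
      then have "0 \<le> a * (X + a * Z)"
        unfolding qxa X_def by (simp add: algebra_simps)
      then show ?thesis using a by (simp add: zero_le_mult_iff)
    qed
    then have "eventually (\<lambda>a. 0 \<le> X + a * Z) (at_right 0)"
      unfolding eventually_at_right_field by (intro exI[of _ 1]) auto
    moreover have "((\<lambda>a. X + a * Z) \<longlongrightarrow> X + 0 * Z) (at_right 0)"
      by (intro tendsto_intros)
    ultimately have "0 \<le> X" by (simp add: tendsto_lowerbound)
    moreover have "inner ((1 / \<tau>) *\<^sub>R (v - u)) (w - u) = - (I / \<tau>)"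
      unfolding I_def by (simp add: inner_diff_left diff_divide_distrib)
    ultimately show ?thesis unfolding X_def by simp
  qed
  moreover have "f w \<noteq> -\<infinity>" for w using proper unfolding proper_fun_def by simp
  ultimately have "f u + ereal (inner ((1 / \<tau>) *\<^sub>R (v - u)) (w - u)) \<le> f w" for w
    using Fu by (cases "f w") simp_all
  then show ?thesis unfolding subdiff_def u_def[symmetric] using \<open>f u < \<infinity>\<close> by blast
qed

section \<open>KKT pairs\<close>

definition kkt_pair :: "(complex ^ 'n \<Rightarrow> ereal) \<Rightarrow> complex ^ 'n ^ 'm \<Rightarrow> complex ^ 'm \<Rightarrow> complex ^ 'n \<Rightarrow> complex ^ 'm \<Rightarrow> bool" where
  "kkt_pair f D b u l \<longleftrightarrow> D *v u = b \<and> - (cadj D *v l) \<in> subdiff f u"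

lemma kkt_pair_optimal:
  assumes "kkt_pair f D b u l" "D *v v = b"
  shows "f u \<le> f v"
proof -
  have "inner (- (cadj D *v l)) (v - u) = - inner (D *v (v - u)) l"
    unfolding inner_matrix_vector_mult_cadj by (simp add: inner_commute)
  also have "D *v (v - u) = 0"
    using assms unfolding kkt_pair_def by (simp add: matrix_vector_mult_diff_distrib)
  finally have "inner (- (cadj D *v l)) (v - u) = 0" by simp
  moreover have "f u + ereal (inner (- (cadj D *v l)) (v - u)) \<le> f v"
    using assms(1) unfolding kkt_pair_def subdiff_def by blast
  ultimately show ?thesis by simp
qed

section \<open>Quasi-Fejer sequences\<close>

lemma quasi_fejer_le:
  fixes a \<epsilon> :: "nat \<Rightarrow> real"
  assumes step: "\<And>t. T \<le> t \<Longrightarrow> a (Suc t) \<le> (1 + \<epsilon> t) * a t"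
    and a_nonneg: "\<And>t. 0 \<le> a t" and \<epsilon>_nonneg: "\<And>t. 0 \<le> \<epsilon> t" and "summable \<epsilon>"
    and "T \<le> s" "s \<le> t"
  shows "a t \<le> exp (suminf \<epsilon>) * a s"
proof -
  have "a (s + k) \<le> exp (\<Sum>r\<in>{s..<s + k}. \<epsilon> r) * a s" for k
  proof (induction k)
    case (Suc k)
    have "a (s + Suc k) \<le> (1 + \<epsilon> (s + k)) * a (s + k)" using step \<open>T \<le> s\<close> by simp
    also have "\<dots> \<le> exp (\<epsilon> (s + k)) * a (s + k)"
      using a_nonneg by (intro mult_right_mono) (auto simp: add.commute exp_ge_add_one_self)
    also have "\<dots> \<le> exp (\<epsilon> (s + k)) * (exp (\<Sum>r\<in>{s..<s + k}. \<epsilon> r) * a s)"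
      using Suc.IH by (intro mult_left_mono) auto
    also have "\<dots> = exp (\<Sum>r\<in>{s..<s + Suc k}. \<epsilon> r) * a s"
      by (simp add: exp_add add.commute)
    finally show ?case .
  qed simp
  moreover obtain k where "t = s + k" using \<open>s \<le> t\<close> le_Suc_ex by blast
  moreover have "(\<Sum>r\<in>{s..<s + k}. \<epsilon> r) \<le> suminf \<epsilon>"
    using sum_le_suminf[OF \<open>summable \<epsilon>\<close>] \<epsilon>_nonneg by auto
  ultimately show ?thesis
    using a_nonneg[of s] by (meson exp_le_cancel_iff mult_right_mono order_trans)
qed

lemma quasi_fejer_eventually_bounded:
  fixes a \<epsilon> :: "nat \<Rightarrow> real"
  assumes step: "\<forall>\<^sub>F t in sequentially. a (Suc t) \<le> (1 + \<epsilon> t) * a t"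
    and "\<And>t. 0 \<le> a t" "\<And>t. 0 \<le> \<epsilon> t" "summable \<epsilon>"
  obtains B where "\<forall>\<^sub>F t in sequentially. a t \<le> B"
proof -
  obtain T where "\<And>t. T \<le> t \<Longrightarrow> a (Suc t) \<le> (1 + \<epsilon> t) * a t"
    using step unfolding eventually_sequentially by blast
  then have "a t \<le> exp (suminf \<epsilon>) * a T" if "T \<le> t" for t
    using quasi_fejer_le assms(2-4) that by blast
  then show ?thesis using that unfolding eventually_sequentially by blast
qed

lemma quasi_fejer_residual_tendsto_zero:
  fixes a \<epsilon> \<rho> :: "nat \<Rightarrow> real"
  assumes step: "\<forall>\<^sub>F t in sequentially. a (Suc t) \<le> (1 + \<epsilon> t) * a t - \<rho> t"
    and a_nonneg: "\<And>t. 0 \<le> a t" and \<epsilon>_nonneg: "\<And>t. 0 \<le> \<epsilon> t" and "summable \<epsilon>"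
    and \<rho>_nonneg: "\<And>t. 0 \<le> \<rho> t"
  shows "\<rho> \<longlonglongrightarrow> 0"
proof -
  have "\<forall>\<^sub>F t in sequentially. a (Suc t) \<le> (1 + \<epsilon> t) * a t"
    using step by eventually_elim (use \<rho>_nonneg in smt)
  then obtain B where "\<forall>\<^sub>F t in sequentially. a t \<le> B"
    using quasi_fejer_eventually_bounded assms(2-4) by blast
  with step obtain T where
    step': "\<And>t. T \<le> t \<Longrightarrow> a (Suc t) \<le> (1 + \<epsilon> t) * a t - \<rho> t" and
    bound: "\<And>t. T \<le> t \<Longrightarrow> a t \<le> B"
    unfolding eventually_sequentially by (metis (full_types) le_trans nat_le_linear)
  have residual: "\<rho> (k + T) \<le> a (k + T) - a (Suc k + T) + \<epsilon> (k + T) * B" for k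
    using step'[of "k + T"] bound[of "k + T"] mult_left_mono[of "a (k + T)" B "\<epsilon> (k + T)"]
      \<epsilon>_nonneg by (simp add: algebra_simps)
  have "(\<Sum>k<N. \<rho> (k + T)) \<le> a T + B * suminf (\<lambda>k. \<epsilon> (k + T))" for N
  proof -
    have "(\<Sum>k<N. \<rho> (k + T)) \<le> (\<Sum>k<N. a (k + T) - a (Suc k + T)) + B * (\<Sum>k<N. \<epsilon> (k + T))"
      using residual
      by (simp add: sum.distrib[symmetric] sum_distrib_left mult.commute sum_mono)
    moreover have "(\<Sum>k<N. a (k + T) - a (Suc k + T)) = a T - a (N + T)"
      by (induction N) simp_all
    moreover have "B * (\<Sum>k<N. \<epsilon> (k + T)) \<le> B * suminf (\<lambda>k. \<epsilon> (k + T))"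
      using sum_le_suminf[of "\<lambda>k. \<epsilon> (k + T)"] \<open>summable \<epsilon>\<close> \<epsilon>_nonneg a_nonneg[of T] bound[of T]
      by (intro mult_left_mono) (auto simp: summable_iff_shift)
    ultimately show ?thesis using a_nonneg[of "N + T"] by linarith
  qed
  then have "summable (\<lambda>k. \<rho> (k + T))"
    using \<rho>_nonneg by (intro summableI_nonneg_bounded) auto
  then show ?thesis using summable_LIMSEQ_zero LIMSEQ_offset by blast
qed

lemma quasi_fejer_tendsto_zero_subseq:
  fixes a \<epsilon> :: "nat \<Rightarrow> real"
  assumes step: "\<forall>\<^sub>F t in sequentially. a (Suc t) \<le> (1 + \<epsilon> t) * a t"
    and a_nonneg: "\<And>t. 0 \<le> a t" and "\<And>t. 0 \<le> \<epsilon> t" "summable \<epsilon>"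
    and "strict_mono r" and sub: "(\<lambda>k. a (r k)) \<longlonglongrightarrow> 0"
  shows "a \<longlonglongrightarrow> 0"
proof (rule LIMSEQ_I)
  fix e :: real assume "0 < e"
  obtain T where T: "\<And>t. T \<le> t \<Longrightarrow> a (Suc t) \<le> (1 + \<epsilon> t) * a t"
    using step unfolding eventually_sequentially by blast
  have "\<forall>\<^sub>F k in sequentially. a (r k) < e / exp (suminf \<epsilon>)"
    using order_tendstoD(2)[OF sub] \<open>0 < e\<close> by simp
  moreover have "\<forall>\<^sub>F k in sequentially. T \<le> r k"
    using filterlim_subseq[OF \<open>strict_mono r\<close>] unfolding filterlim_at_top by blast
  ultimately obtain k where k: "a (r k) < e / exp (suminf \<epsilon>)" "T \<le> r k"
    using eventually_happens'[OF sequentially_bot] eventually_conj by blast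
  have "norm (a t - 0) < e" if "r k \<le> t" for t
  proof -
    have "a t \<le> exp (suminf \<epsilon>) * a (r k)"
      using quasi_fejer_le[OF T a_nonneg assms(3,4) k(2) that] .
    also have "\<dots> < e" using k(1) by (simp add: field_simps)
    finally show ?thesis using a_nonneg[of t] by simp
  qed
  then show "\<exists>N. \<forall>t\<ge>N. norm (a t - 0) < e" by blast
qed

lemma tendsto_scaleR_bounded_zero:
  fixes X :: "nat \<Rightarrow> 'a::real_normed_vector"
  assumes "\<And>k. \<bar>c k\<bar> \<le> K" and "X \<longlonglongrightarrow> 0"
  shows "(\<lambda>k. c k *\<^sub>R X k) \<longlonglongrightarrow> 0"
proof (rule Lim_null_comparison)
  show "\<forall>\<^sub>F k in sequentially. norm (c k *\<^sub>R X k) \<le> K * norm (X k)"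
    using assms(1) by (simp add: mult_right_mono)
  show "(\<lambda>k. K * norm (X k)) \<longlonglongrightarrow> 0"
    using tendsto_mult_right_zero[OF tendsto_norm_zero[OF assms(2)]] .
qed

section \<open>Stepsizes\<close>

lemma exp_neg_le_one_minus:
  fixes m \<omega> :: real
  assumes "0 < m" "m \<le> 1" "0 \<le> \<omega>" "\<omega> \<le> 1"
  shows "exp (- ((1 - m) / m * \<omega>)) \<le> 1 - \<omega> * (1 - m)"
proof -
  define c where "c = (1 - m) / m"
  have "0 \<le> c" using assms by (simp add: c_def)
  have "1 / exp (c * \<omega>) \<le> 1 / (1 + c * \<omega>)"
    using exp_ge_add_one_self[of "c * \<omega>"] \<open>0 \<le> c\<close> assms
    by (intro divide_left_mono) (auto intro!: mult_pos_pos add_pos_nonneg)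
  then have "exp (- (c * \<omega>)) \<le> 1 / (1 + c * \<omega>)" by (simp add: exp_minus inverse_eq_divide)
  also have "\<dots> \<le> 1 - \<omega> * (1 - m)"
  proof -
    have "(1 - \<omega> * (1 - m)) * (1 + c * \<omega>) = 1 + \<omega> * (1 - m)\<^sup>2 * (1 - \<omega>) / m"
      using assms unfolding c_def by (simp add: field_simps power2_eq_square)
    moreover have "0 \<le> \<omega> * (1 - m)\<^sup>2 * (1 - \<omega>) / m" using assms by simp
    moreover have "0 < 1 + c * \<omega>" using \<open>0 \<le> c\<close> assms by (simp add: add_pos_nonneg)
    ultimately show ?thesis by (simp add: divide_le_eq)
  qed
  finally show ?thesis unfolding c_def .
qed

lemma relaxation_factor_bounds:
  fixes \<omega> \<eta> m M :: real
  assumes "0 < \<omega>" "\<omega> \<le> 1" and "0 < m" "m \<le> 1" "m \<le> \<eta>" and "1 \<le> M" "\<eta> \<le> M"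
  defines "\<kappa> \<equiv> 1 - \<omega> + \<omega> * \<eta>"
  shows "m \<le> \<kappa>" "\<kappa> \<le> M" "\<bar>\<kappa>\<^sup>2 - 1\<bar> \<le> \<omega> * (M * (M + 1))"
    "\<kappa> \<le> exp (M * \<omega>)" "exp (- ((1 - m) / m * \<omega>)) \<le> \<kappa>"
proof -
  have lower: "1 - \<omega> * (1 - m) \<le> \<kappa>" and upper: "\<kappa> \<le> 1 + \<omega> * (M - 1)"
    using assms mult_left_mono[of m \<eta> \<omega>] mult_left_mono[of \<eta> M \<omega>] by (simp_all add: algebra_simps)
  moreover have "\<omega> * (1 - m) \<le> 1 - m" "\<omega> * (M - 1) \<le> M - 1"
    using assms by (simp_all add: mult_left_le_one_le)
  ultimately show "m \<le> \<kappa>" "\<kappa> \<le> M" by linarith+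
  have "\<omega> * (M - 1) \<le> \<omega> * M" "\<omega> * (1 - m) \<le> \<omega> * M"
    using assms by (simp_all add: mult_left_mono)
  then have "\<bar>\<kappa> - 1\<bar> \<le> \<omega> * M" using lower upper by linarith
  moreover have "\<bar>\<kappa> + 1\<bar> \<le> M + 1" using \<open>m \<le> \<kappa>\<close> \<open>\<kappa> \<le> M\<close> assms by simp
  ultimately have "\<bar>\<kappa> - 1\<bar> * \<bar>\<kappa> + 1\<bar> \<le> (\<omega> * M) * (M + 1)"
    by (intro mult_mono) auto
  then show "\<bar>\<kappa>\<^sup>2 - 1\<bar> \<le> \<omega> * (M * (M + 1))"
    by (simp add: power2_eq_square abs_mult[symmetric] algebra_simps)
  have "\<omega> * (M - 1) \<le> M * \<omega>" using assms by (simp add: algebra_simps)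
  then show "\<kappa> \<le> exp (M * \<omega>)"
    using upper exp_ge_add_one_self[of "M * \<omega>"] by linarith
  show "exp (- ((1 - m) / m * \<omega>)) \<le> \<kappa>"
    using exp_neg_le_one_minus[of m \<omega>] lower assms by simp
qed

lemma product_sequence_bounds:
  fixes \<tau> \<kappa> \<omega> :: "nat \<Rightarrow> real"
  assumes "0 < \<tau> 0" and step: "\<And>t. \<tau> (Suc t) = \<kappa> t * \<tau> t"
    and lower: "\<And>t. exp (- (c * \<omega> t)) \<le> \<kappa> t" and upper: "\<And>t. \<kappa> t \<le> exp (C * \<omega> t)"
    and "\<And>t. 0 \<le> \<omega> t" "summable \<omega>" "0 \<le> c" "0 \<le> C"
  shows "\<tau> 0 * exp (- (c * suminf \<omega>)) \<le> \<tau> t" "\<tau> t \<le> \<tau> 0 * exp (C * suminf \<omega>)"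
proof -
  have bounds: "\<tau> 0 * exp (- (c * (\<Sum>s<t. \<omega> s))) \<le> \<tau> t \<and> \<tau> t \<le> \<tau> 0 * exp (C * (\<Sum>s<t. \<omega> s))" for t
  proof (induction t)
    case (Suc t)
    have "0 < \<kappa> t" using lower[of t] by (smt (verit) exp_gt_zero)
    have "\<tau> 0 * exp (- (c * (\<Sum>s<Suc t. \<omega> s))) = exp (- (c * \<omega> t)) * (\<tau> 0 * exp (- (c * (\<Sum>s<t. \<omega> s))))"
      by (simp add: algebra_simps exp_add[symmetric])
    also have "\<dots> \<le> \<kappa> t * \<tau> t"
      using Suc.IH lower[of t] \<open>0 < \<tau> 0\<close> \<open>0 < \<kappa> t\<close> by (intro mult_mono) auto
    finally have lo: "\<tau> 0 * exp (- (c * (\<Sum>s<Suc t. \<omega> s))) \<le> \<tau> (Suc t)" using step[of t] by simp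
    have "\<kappa> t * \<tau> t \<le> exp (C * \<omega> t) * (\<tau> 0 * exp (C * (\<Sum>s<t. \<omega> s)))"
      using Suc.IH upper[of t] \<open>0 < \<kappa> t\<close> \<open>0 < \<tau> 0\<close>
      by (intro mult_mono) (auto intro: order_trans[rotated])
    also have "\<dots> = \<tau> 0 * exp (C * (\<Sum>s<Suc t. \<omega> s))"
      by (simp add: algebra_simps exp_add[symmetric])
    finally show ?case using lo step[of t] by simp
  qed simp
  have "(\<Sum>s<t. \<omega> s) \<le> suminf \<omega>" using sum_le_suminf assms(5,6) by blast
  then have "c * (\<Sum>s<t. \<omega> s) \<le> c * suminf \<omega>" "C * (\<Sum>s<t. \<omega> s) \<le> C * suminf \<omega>"
    using assms(7,8) by (simp_all add: mult_left_mono)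
  then have "\<tau> 0 * exp (- (c * suminf \<omega>)) \<le> \<tau> 0 * exp (- (c * (\<Sum>s<t. \<omega> s)))"
    "\<tau> 0 * exp (C * (\<Sum>s<t. \<omega> s)) \<le> \<tau> 0 * exp (C * suminf \<omega>)"
    using \<open>0 < \<tau> 0\<close> by simp_all
  then show "\<tau> 0 * exp (- (c * suminf \<omega>)) \<le> \<tau> t" "\<tau> t \<le> \<tau> 0 * exp (C * suminf \<omega>)"
    using bounds[of t] by linarith+
qed

section \<open>The primal-dual energy\<close>

definition pd_energy :: "('b::real_normed_vector \<Rightarrow> 'a::real_normed_vector) \<Rightarrow> real \<Rightarrow> real \<Rightarrow> 'a \<Rightarrow> 'b \<Rightarrow> real" where
  "pd_energy A \<theta> \<tau> x y = (norm (x - \<tau> *\<^sub>R A y))\<^sup>2 + (\<tau> * \<theta>)\<^sup>2 * (norm y)\<^sup>2"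

lemma pd_energy_nonneg: "0 \<le> pd_energy A \<theta> \<tau> x y"
  unfolding pd_energy_def by simp

lemma pd_energy_rescale:
  fixes A :: "'b::real_normed_vector \<Rightarrow> 'a::real_inner"
  assumes "\<kappa> \<noteq> 0"
  shows "pd_energy A \<theta> (\<kappa> * \<tau>) a y
    = \<kappa>\<^sup>2 * ((norm a)\<^sup>2 + \<tau>\<^sup>2 * ((norm (A y))\<^sup>2 + \<theta>\<^sup>2 * (norm y)\<^sup>2) - (2 * \<tau> / \<kappa>) * inner a (A y))
      + (1 - \<kappa>\<^sup>2) * (norm a)\<^sup>2"
  unfolding pd_energy_def power2_norm_diff using assms by (simp add: power2_eq_square field_simps)

lemma power2_norm_le_pd_energy:
  fixes A :: "'b::real_normed_vector \<Rightarrow> 'a::real_normed_vector"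
  assumes bound: "norm (A y) \<le> nA * norm y" and "0 \<le> \<tau>" "0 < \<theta>" "0 \<le> nA"
  shows "(norm x)\<^sup>2 \<le> (2 + 2 * nA\<^sup>2 / \<theta>\<^sup>2) * pd_energy A \<theta> \<tau> x y"
proof -
  define X where "X = norm (x - \<tau> *\<^sub>R A y)"
  define Y where "Y = \<tau> * nA * norm y"
  have "norm x \<le> X + norm (\<tau> *\<^sub>R A y)"
    unfolding X_def using norm_triangle_ineq[of "x - \<tau> *\<^sub>R A y" "\<tau> *\<^sub>R A y"] by simp
  also have "norm (\<tau> *\<^sub>R A y) \<le> Y"
    unfolding Y_def using mult_left_mono[OF bound \<open>0 \<le> \<tau>\<close>] \<open>0 \<le> \<tau>\<close> by (simp add: mult.assoc)
  finally have "(norm x)\<^sup>2 \<le> (X + Y)\<^sup>2" by (simp add: power_mono)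
  also have "\<dots> \<le> 2 * X\<^sup>2 + 2 * Y\<^sup>2"
    using zero_le_power2[of "X - Y"] by (simp add: power2_eq_square algebra_simps)
  also have "2 * Y\<^sup>2 = (2 * nA\<^sup>2 / \<theta>\<^sup>2) * ((\<tau> * \<theta>)\<^sup>2 * (norm y)\<^sup>2)"
    unfolding Y_def using \<open>0 < \<theta>\<close> by (simp add: power_mult_distrib field_simps)
  also have "2 * X\<^sup>2 + \<dots> \<le> (2 + 2 * nA\<^sup>2 / \<theta>\<^sup>2) * pd_energy A \<theta> \<tau> x y"
    unfolding pd_energy_def X_def[symmetric] by (simp add: algebra_simps)
  finally show ?thesis .
qed

lemma norm_le_pd_energy:
  fixes A :: "'b::real_normed_vector \<Rightarrow> 'a::real_normed_vector"
  assumes bound: "\<And>y. norm (A y) \<le> nA * norm y" and "0 \<le> nA"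
    and "\<tau>l \<le> \<tau>" "\<tau> \<le> \<tau>u" "0 < \<tau>l" "0 < \<theta>"
  shows "norm y \<le> sqrt (pd_energy A \<theta> \<tau> x y) / (\<tau>l * \<theta>)"
    and "norm x \<le> sqrt (pd_energy A \<theta> \<tau> x y) + \<tau>u * nA * (sqrt (pd_energy A \<theta> \<tau> x y) / (\<tau>l * \<theta>))"
proof -
  define E where "E = pd_energy A \<theta> \<tau> x y"
  have "(\<tau> * \<theta> * norm y)\<^sup>2 \<le> E" "(norm (x - \<tau> *\<^sub>R A y))\<^sup>2 \<le> E"
    unfolding E_def pd_energy_def by (simp_all add: power_mult_distrib)
  then have Ey: "\<tau> * \<theta> * norm y \<le> sqrt E" and Ex: "norm (x - \<tau> *\<^sub>R A y) \<le> sqrt E"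
    by (simp_all add: real_le_rsqrt)
  have "\<tau>l * \<theta> * norm y \<le> \<tau> * \<theta> * norm y"
    using assms by (intro mult_right_mono) auto
  then have "\<tau>l * \<theta> * norm y \<le> sqrt E" using Ey by linarith
  then show y: "norm y \<le> sqrt E / (\<tau>l * \<theta>)"
    using assms by (simp add: pos_le_divide_eq mult.commute)
  have "norm x \<le> norm (x - \<tau> *\<^sub>R A y) + \<tau> * norm (A y)"
    using norm_triangle_ineq[of "x - \<tau> *\<^sub>R A y" "\<tau> *\<^sub>R A y"] assms by simp
  also have "\<tau> * norm (A y) \<le> \<tau>u * (nA * (sqrt E / (\<tau>l * \<theta>)))"
    using assms y bound by (intro mult_mono order_trans[OF bound] mult_left_mono) auto
  finally show "norm x \<le> sqrt E + \<tau>u * nA * (sqrt E / (\<tau>l * \<theta>))"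
    using Ex by (simp add: mult.assoc)
qed

text \<open>Testing the dual identity \<open>dual\<close> against \<open>y\<close> eliminates \<open>\<langle>a, A y\<rangle>/\<kappa>\<close>; together
  with \<open>mono\<close> what remains is an identity between inner products.\<close>

lemma pd_energy_descent_core:
  fixes L :: "'a::real_inner \<Rightarrow> 'b::real_inner" and A :: "'b \<Rightarrow> 'a"
  assumes adj: "\<And>x y. inner (L x) y = inner x (A y)" and "linear A" and "\<kappa> > 0"
    and mono: "\<tau> * inner y0 (L a) \<le> inner (a0 - a) a"
    and dual: "(\<kappa> * \<tau>) *\<^sub>R (L (A (y - y0)) + \<theta>\<^sup>2 *\<^sub>R (y - y0)) = L a + \<kappa> *\<^sub>R L (a - a0)"
  shows "(norm a)\<^sup>2 + \<tau>\<^sup>2 * ((norm (A y))\<^sup>2 + \<theta>\<^sup>2 * (norm y)\<^sup>2) - (2 * \<tau> / \<kappa>) * inner a (A y)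
           + pd_energy A \<theta> \<tau> (a - a0) (y - y0)
         \<le> pd_energy A \<theta> \<tau> a0 y0"
proof -
  define aa a0a0 aa0 aB aC a0B a0C BB BC CC yy yy0 y0y0 where
    "aa = inner a a" and "a0a0 = inner a0 a0" and "aa0 = inner a a0"
    and "aB = inner a (A y)" and "aC = inner a (A y0)" and "a0B = inner a0 (A y)"
    and "a0C = inner a0 (A y0)" and "BB = inner (A y) (A y)" and "BC = inner (A y) (A y0)"
    and "CC = inner (A y0) (A y0)" and "yy = inner y y" and "yy0 = inner y y0" and "y0y0 = inner y0 y0"
  note defs = aa_def a0a0_def aa0_def aB_def aC_def a0B_def a0C_def BB_def BC_def CC_def yy_def
    yy0_def y0y0_def
  have A_diff: "A (y - y0) = A y - A y0" using \<open>linear A\<close> by (rule linear_diff)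
  have "inner ((\<kappa> * \<tau>) *\<^sub>R (L (A (y - y0)) + \<theta>\<^sup>2 *\<^sub>R (y - y0))) y = inner (L a + \<kappa> *\<^sub>R L (a - a0)) y"
    using dual by simp
  then have "\<kappa> * \<tau> * ((BB - BC) + \<theta>\<^sup>2 * (yy - yy0)) = aB + \<kappa> * (aB - a0B)"
    unfolding inner_scaleR_left inner_add_left adj A_diff
    by (simp add: defs inner_diff_left inner_diff_right inner_commute algebra_simps)
  then have "aB = \<kappa> * (\<tau> * (BB - BC) + \<tau> * \<theta>\<^sup>2 * (yy - yy0) - (aB - a0B))"
    by (simp add: algebra_simps)
  then have "aB / \<kappa> = \<tau> * (BB - BC) + \<tau> * \<theta>\<^sup>2 * (yy - yy0) - (aB - a0B)"
    using \<open>\<kappa> > 0\<close> by (metis less_irrefl nonzero_mult_div_cancel_left)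
  then have aB: "(2 * \<tau> / \<kappa>) * aB = 2 * \<tau> * (\<tau> * (BB - BC) + \<tau> * \<theta>\<^sup>2 * (yy - yy0) - (aB - a0B))"
    by (metis times_divide_eq_left times_divide_eq_right)
  have "aa0 - aa \<ge> \<tau> * aC"
    using mono unfolding defs inner_commute[of y0] adj by (simp add: inner_diff_right inner_commute)
  moreover have "pd_energy A \<theta> \<tau> a0 y0 = a0a0 - 2 * \<tau> * a0C + \<tau>\<^sup>2 * CC + (\<tau> * \<theta>)\<^sup>2 * y0y0"
    unfolding pd_energy_def defs power2_norm_eq_inner
    by (simp add: inner_diff_left inner_diff_right inner_commute power2_eq_square algebra_simps)
  moreover have "pd_energy A \<theta> \<tau> (a - a0) (y - y0) = (aa - 2 * aa0 + a0a0)
      - 2 * \<tau> * (aB - aC - a0B + a0C) + \<tau>\<^sup>2 * (BB - 2 * BC + CC) + (\<tau> * \<theta>)\<^sup>2 * (yy - 2 * yy0 + y0y0)"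
    unfolding pd_energy_def defs power2_norm_eq_inner A_diff
    by (simp add: inner_diff_left inner_diff_right inner_commute power2_eq_square algebra_simps)
  moreover have "(norm a)\<^sup>2 + \<tau>\<^sup>2 * ((norm (A y))\<^sup>2 + \<theta>\<^sup>2 * (norm y)\<^sup>2) = aa + \<tau>\<^sup>2 * (BB + \<theta>\<^sup>2 * yy)"
    unfolding defs power2_norm_eq_inner ..
  ultimately show ?thesis
    unfolding aB aB_def[symmetric] by (simp add: algebra_simps power2_eq_square)
qed

text \<open>For \<open>\<kappa> < 1\<close> the excess \<open>(1 - \<kappa>\<^sup>2)N \<le> \<delta>E\<^sub>1\<close> is absorbed into the left-hand side,
  at the price of the factor \<open>1/(1 - \<delta>) \<le> 1 + 2\<delta>\<close> for \<open>\<delta> \<le> 1/2\<close>.\<close>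

lemma perturbed_descent_real:
  fixes E0 E1 Q \<rho> N \<kappa> C :: real
  assumes E0: "Q + \<rho> \<le> E0" and E1: "E1 = \<kappa>\<^sup>2 * Q + (1 - \<kappa>\<^sup>2) * N" and N: "N \<le> C * E1"
    and "0 \<le> E1" "0 \<le> \<rho>" "0 < \<kappa>" "1 \<le> C" "0 \<le> N" "0 \<le> E0"
    and small: "C * \<bar>\<kappa>\<^sup>2 - 1\<bar> \<le> 1/2"
  shows "E1 \<le> (1 + 2 * C * \<bar>\<kappa>\<^sup>2 - 1\<bar>) * E0 - \<rho>"
proof (cases "1 \<le> \<kappa>\<^sup>2")
  case True
  have "E1 \<le> \<kappa>\<^sup>2 * (E0 - \<rho>)"
    using E1 E0 True \<open>0 \<le> N\<close> mult_left_mono[of Q "E0 - \<rho>" "\<kappa>\<^sup>2"] mult_right_mono[of "1 - \<kappa>\<^sup>2" 0 N]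
    by auto
  also have "\<dots> \<le> \<kappa>\<^sup>2 * E0 - \<rho>"
    using True \<open>0 \<le> \<rho>\<close> mult_right_mono[OF True \<open>0 \<le> \<rho>\<close>] by (simp add: right_diff_distrib)
  also have "\<kappa>\<^sup>2 * E0 \<le> (1 + 2 * C * \<bar>\<kappa>\<^sup>2 - 1\<bar>) * E0"
    using True \<open>1 \<le> C\<close> \<open>0 \<le> E0\<close> mult_right_mono[of 1 "2 * C" "\<kappa>\<^sup>2 - 1"]
    by (intro mult_right_mono) auto
  finally show ?thesis by simp
next
  case False
  define \<delta> where "\<delta> = C * (1 - \<kappa>\<^sup>2)"
  have \<delta>: "0 \<le> \<delta>" "\<delta> \<le> 1/2" "\<delta> = C * \<bar>\<kappa>\<^sup>2 - 1\<bar>"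
    using False small \<open>1 \<le> C\<close> by (auto simp: \<delta>_def)
  have "(1 - \<kappa>\<^sup>2) * N \<le> (1 - \<kappa>\<^sup>2) * (C * E1)"
    using False by (intro mult_left_mono[OF N]) auto
  then have "(1 - \<kappa>\<^sup>2) * N \<le> \<delta> * E1" unfolding \<delta>_def by (simp add: algebra_simps)
  then have "E1 - \<delta> * E1 \<le> \<kappa>\<^sup>2 * (E0 - \<rho>)"
    using E1 E0 mult_left_mono[of Q "E0 - \<rho>" "\<kappa>\<^sup>2"] by simp
  then have "(1 - \<delta>) * E1 \<le> \<kappa>\<^sup>2 * (E0 - \<rho>)" by (simp add: left_diff_distrib)
  moreover have "0 \<le> (1 - \<delta>) * E1" using \<delta> \<open>0 \<le> E1\<close> by simp
  ultimately have "0 \<le> \<kappa>\<^sup>2 * (E0 - \<rho>)" by linarith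
  then have "0 \<le> E0 - \<rho>" using \<open>0 < \<kappa>\<close> by (simp add: zero_le_mult_iff)
  then have "(1 - \<delta>) * E1 \<le> E0 - \<rho>"
    using \<open>(1 - \<delta>) * E1 \<le> _\<close> False mult_right_mono[of "\<kappa>\<^sup>2" 1 "E0 - \<rho>"] by simp
  moreover have "E1 \<le> (1 + 2 * \<delta>) * ((1 - \<delta>) * E1)"
    using \<delta> \<open>0 \<le> E1\<close> mult_right_mono[of 1 "(1 + 2 * \<delta>) * (1 - \<delta>)" E1]
      mult_nonneg_nonneg[of \<delta> "1 - 2 * \<delta>"] by (simp add: algebra_simps)
  moreover have "(1 + 2 * \<delta>) * ((1 - \<delta>) * E1) \<le> (1 + 2 * \<delta>) * (E0 - \<rho>)"
    using \<open>(1 - \<delta>) * E1 \<le> E0 - \<rho>\<close> \<delta> by (intro mult_left_mono) auto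
  ultimately have "E1 \<le> (1 + 2 * \<delta>) * (E0 - \<rho>)" by linarith
  also have "\<dots> = (1 + 2 * \<delta>) * E0 - \<rho> - 2 * (\<delta> * \<rho>)" by (simp add: algebra_simps)
  also have "\<dots> \<le> (1 + 2 * \<delta>) * E0 - \<rho>" using \<delta> \<open>0 \<le> \<rho>\<close> by simp
  finally show ?thesis using \<delta> by (simp add: algebra_simps)
qed

lemma pd_energy_descent:
  fixes L :: "'a::real_inner \<Rightarrow> 'b::real_inner" and A :: "'b \<Rightarrow> 'a"
  assumes adj: "\<And>x y. inner (L x) y = inner x (A y)" and "linear A"
    and bound: "\<And>y. norm (A y) \<le> nA * norm y" and "0 \<le> nA" and "0 < \<theta>" "0 < \<tau>" "0 < \<kappa>"
    and mono: "\<tau> * inner y0 (L a) \<le> inner (a0 - a) a"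
    and dual: "(\<kappa> * \<tau>) *\<^sub>R (L (A (y - y0)) + \<theta>\<^sup>2 *\<^sub>R (y - y0)) = L a + \<kappa> *\<^sub>R L (a - a0)"
    and small: "(2 + 2 * nA\<^sup>2 / \<theta>\<^sup>2) * \<bar>\<kappa>\<^sup>2 - 1\<bar> \<le> 1/2"
  shows "pd_energy A \<theta> (\<kappa> * \<tau>) a y \<le> (1 + 2 * (2 + 2 * nA\<^sup>2 / \<theta>\<^sup>2) * \<bar>\<kappa>\<^sup>2 - 1\<bar>) * pd_energy A \<theta> \<tau> a0 y0
           - pd_energy A \<theta> \<tau> (a - a0) (y - y0)"
proof (rule perturbed_descent_real)
  show "(norm a)\<^sup>2 \<le> (2 + 2 * nA\<^sup>2 / \<theta>\<^sup>2) * pd_energy A \<theta> (\<kappa> * \<tau>) a y"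
    using assms by (intro power2_norm_le_pd_energy) auto
qed (use pd_energy_descent_core[OF adj \<open>linear A\<close> \<open>0 < \<kappa>\<close> mono dual]
      pd_energy_rescale[of \<kappa>] pd_energy_nonneg assms in auto)

section \<open>Convergence of ABAL\<close>

locale abal_iteration =
  fixes f :: "complex ^ 'n \<Rightarrow> ereal"
    and D :: "complex ^ 'n ^ 'm" and b :: "complex ^ 'm"
    and \<omega> :: "nat \<Rightarrow> real"
    and \<theta> \<eta>l \<eta>u :: real
    and u ut :: "nat \<Rightarrow> complex ^ 'n"
    and lam p :: "nat \<Rightarrow> complex ^ 'm"
    and tau \<eta> \<kappa> :: "nat \<Rightarrow> real"
  assumes f_proper: "proper_fun f" and f_closed: "closed_fun f" and f_convex: "convex_fun f"
    and KKT: "\<exists>us ls. kkt_pair f D b us ls"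
    and \<omega>_range: "\<And>t. 0 < \<omega> t \<and> \<omega> t \<le> 1"
    and \<omega>_sum: "summable \<omega>"
    and tau_init: "tau 0 > 0"
    and \<theta>_pos: "\<theta> > 0" and \<eta>l_pos: "0 < \<eta>l" and \<eta>_range: "\<And>t. \<eta>l \<le> \<eta> t \<and> \<eta> t \<le> \<eta>u"
    \<comment> \<open>\<open>tau t\<close> stands for \<open>\<tau>\<^sub>t\<^sub>-\<^sub>1\<close>\<close>
    and ut_def: "\<And>t. ut t = u t - tau t *\<^sub>R (cadj D *v lam t)"
    and u_step: "\<And>t. u (Suc t) = prox (tau t) f (ut t)"
    and \<kappa>_def: "\<And>t. \<kappa> t = 1 - \<omega> t + \<omega> t * \<eta> t"
    and tau_step: "\<And>t. tau (Suc t) = \<kappa> t * tau t"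
    and p_def: "\<And>t. p (Suc t) = D *v (u (Suc t) + \<kappa> t *\<^sub>R (u (Suc t) - u t)) - b"
    and lam_step: "\<And>t. lam (Suc t) = lam t +
          inverse (tau (Suc t)) *\<^sub>R (matrix_inv (D ** cadj D + of_real (\<theta>^2) *\<^sub>R mat 1) *v p (Suc t))"
begin

definition "\<kappa>_min = min 1 \<eta>l"
definition "\<kappa>_max = max 1 \<eta>u"
definition "tau_min = tau 0 * exp (- ((1 - \<kappa>_min) / \<kappa>_min * suminf \<omega>))"
definition "tau_max = tau 0 * exp (\<kappa>_max * suminf \<omega>)"
definition "adj_norm = onorm (\<lambda>y. cadj D *v y)"
definition "energy_const = 2 + 2 * adj_norm\<^sup>2 / \<theta>\<^sup>2"
definition "\<epsilon> t = 2 * energy_const * \<bar>(\<kappa> t)\<^sup>2 - 1\<bar>"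

definition "energy us ls t = pd_energy (\<lambda>y. cadj D *v y) \<theta> (tau t) (u t - us) (lam t - ls)"
definition "residual t = pd_energy (\<lambda>y. cadj D *v y) \<theta> (tau t) (u (Suc t) - u t) (lam (Suc t) - lam t)"

lemma \<kappa>_bounds:
  "\<kappa>_min \<le> \<kappa> t" "\<kappa> t \<le> \<kappa>_max" "\<bar>(\<kappa> t)\<^sup>2 - 1\<bar> \<le> \<omega> t * (\<kappa>_max * (\<kappa>_max + 1))"
  "\<kappa> t \<le> exp (\<kappa>_max * \<omega> t)" "exp (- ((1 - \<kappa>_min) / \<kappa>_min * \<omega> t)) \<le> \<kappa> t"
proof -
  have "0 < \<omega> t" "\<omega> t \<le> 1" "0 < \<kappa>_min" "\<kappa>_min \<le> 1" "\<kappa>_min \<le> \<eta> t" "1 \<le> \<kappa>_max" "\<eta> t \<le> \<kappa>_max"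
    using \<omega>_range[of t] \<eta>_range[of t] \<eta>l_pos by (auto simp: \<kappa>_min_def \<kappa>_max_def)
  from relaxation_factor_bounds[OF this]
  show "\<kappa>_min \<le> \<kappa> t" "\<kappa> t \<le> \<kappa>_max" "\<bar>(\<kappa> t)\<^sup>2 - 1\<bar> \<le> \<omega> t * (\<kappa>_max * (\<kappa>_max + 1))"
    "\<kappa> t \<le> exp (\<kappa>_max * \<omega> t)" "exp (- ((1 - \<kappa>_min) / \<kappa>_min * \<omega> t)) \<le> \<kappa> t"
    unfolding \<kappa>_def by simp_all
qed

lemma \<kappa>_pos: "0 < \<kappa> t"
  using \<kappa>_bounds(1)[of t] \<eta>l_pos unfolding \<kappa>_min_def by linarith

lemma tau_bounds: "tau_min \<le> tau t" "tau t \<le> tau_max"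
proof -
  have "0 < \<kappa>_min" "\<kappa>_min \<le> 1" "1 \<le> \<kappa>_max" using \<eta>l_pos by (auto simp: \<kappa>_min_def \<kappa>_max_def)
  then have "0 \<le> (1 - \<kappa>_min) / \<kappa>_min" "0 \<le> \<kappa>_max" by simp_all
  moreover have "0 \<le> \<omega> t" for t using \<omega>_range[of t] by simp
  ultimately show "tau_min \<le> tau t" "tau t \<le> tau_max"
    unfolding tau_min_def tau_max_def
    using product_sequence_bounds[OF tau_init tau_step \<kappa>_bounds(5) \<kappa>_bounds(4) _ \<omega>_sum] by blast+
qed

lemma tau_min_pos: "0 < tau_min"
  unfolding tau_min_def using tau_init by simp

lemma tau_pos: "0 < tau t"
  using tau_bounds(1)[of t] tau_min_pos by linarith

lemma energy_const_ge_1: "1 \<le> energy_const"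
  unfolding energy_const_def by simp

lemma \<epsilon>_nonneg: "0 \<le> \<epsilon> t"
  unfolding \<epsilon>_def using energy_const_ge_1 by simp

lemma \<epsilon>_summable: "summable \<epsilon>"
proof (rule summable_comparison_test[OF _ summable_mult[OF \<omega>_sum]])
  show "\<exists>N. \<forall>t\<ge>N. norm (\<epsilon> t) \<le> 2 * energy_const * (\<kappa>_max * (\<kappa>_max + 1)) * \<omega> t"
  proof (intro exI allI impI)
    fix t
    have "2 * energy_const * \<bar>(\<kappa> t)\<^sup>2 - 1\<bar> \<le> 2 * energy_const * (\<omega> t * (\<kappa>_max * (\<kappa>_max + 1)))"
      using \<kappa>_bounds(3) energy_const_ge_1 by (intro mult_left_mono) auto
    then show "norm (\<epsilon> t) \<le> 2 * energy_const * (\<kappa>_max * (\<kappa>_max + 1)) * \<omega> t"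
      using \<epsilon>_nonneg[of t] unfolding \<epsilon>_def by (simp add: algebra_simps)
  qed
qed

lemma eventually_small_perturbation: "\<forall>\<^sub>F t in sequentially. energy_const * \<bar>(\<kappa> t)\<^sup>2 - 1\<bar> \<le> 1/2"
proof -
  have "\<epsilon> \<longlonglongrightarrow> 0" using \<epsilon>_summable by (rule summable_LIMSEQ_zero)
  then have "\<forall>\<^sub>F t in sequentially. \<epsilon> t < 1" by (rule order_tendstoD) simp
  then show ?thesis by eventually_elim (simp add: \<epsilon>_def)
qed

lemma adj_norm_nonneg: "0 \<le> adj_norm"
  unfolding adj_norm_def by (rule onorm_pos_le[OF bounded_linear_matrix_vector_mult])

lemma norm_cadj_le: "norm (cadj D *v y) \<le> adj_norm * norm y"
  unfolding adj_norm_def by (rule norm_matrix_vector_mult_le)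

lemma subgradient_step: "(1 / tau t) *\<^sub>R (ut t - u (Suc t)) \<in> subdiff f (u (Suc t))"
proof -
  obtain us ls where "kkt_pair f D b us ls" using KKT by blast
  then show ?thesis
    unfolding u_step kkt_pair_def
    using prox_in_subdiff[OF f_proper f_closed f_convex tau_pos] by blast
qed

lemma dual_step:
  "tau (Suc t) *\<^sub>R (D *v (cadj D *v (lam (Suc t) - lam t)) + \<theta>\<^sup>2 *\<^sub>R (lam (Suc t) - lam t)) = p (Suc t)"
proof -
  let ?M = "D ** cadj D + of_real (\<theta>\<^sup>2) *\<^sub>R mat 1"
  have "?M *v (lam (Suc t) - lam t) = inverse (tau (Suc t)) *\<^sub>R p (Suc t)"
    using lam_step[of t] regularized_gram_inverse[of "\<theta>\<^sup>2" D] \<theta>_pos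
    by (simp add: matrix_vector_mult_scaleR_complex)
  then have "D *v (cadj D *v (lam (Suc t) - lam t)) + \<theta>\<^sup>2 *\<^sub>R (lam (Suc t) - lam t)
      = inverse (tau (Suc t)) *\<^sub>R p (Suc t)"
    unfolding matrix_vector_mult_regularized_gram .
  then show ?thesis using tau_pos[of "Suc t"] by simp
qed

lemma energy_descent:
  assumes "kkt_pair f D b us ls" and small: "energy_const * \<bar>(\<kappa> t)\<^sup>2 - 1\<bar> \<le> 1/2"
  shows "energy us ls (Suc t) \<le> (1 + \<epsilon> t) * energy us ls t - residual t"
proof -
  define a0 a y0 y where "a0 = u t - us" and "a = u (Suc t) - us"
    and "y0 = lam t - ls" and "y = lam (Suc t) - ls"
  have "a - a0 = u (Suc t) - u t" "y - y0 = lam (Suc t) - lam t"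
    unfolding a0_def a_def y0_def y_def by simp_all
  have mono: "tau t * inner y0 (D *v a) \<le> inner (a0 - a) a"
  proof -
    have "0 \<le> inner ((1 / tau t) *\<^sub>R (ut t - u (Suc t)) - - (cadj D *v ls)) (u (Suc t) - us)"
      using subdiff_monotone[OF f_proper subgradient_step] assms(1) unfolding kkt_pair_def by blast
    moreover have "(1 / tau t) *\<^sub>R (ut t - u (Suc t)) - - (cadj D *v ls) = (1 / tau t) *\<^sub>R (a0 - a) - cadj D *v y0"
      unfolding a0_def a_def y0_def ut_def using tau_pos[of t]
      by (simp add: matrix_vector_mult_diff_distrib algebra_simps)
    ultimately have "0 \<le> inner ((1 / tau t) *\<^sub>R (a0 - a) - cadj D *v y0) a"
      unfolding a_def by simp
    moreover have "inner y0 (D *v a) = inner (cadj D *v y0) a"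
      by (metis inner_commute inner_matrix_vector_mult_cadj)
    ultimately have "inner y0 (D *v a) \<le> (1 / tau t) * inner (a0 - a) a"
      by (simp add: inner_diff_left)
    then have "tau t * inner y0 (D *v a) \<le> tau t * ((1 / tau t) * inner (a0 - a) a)"
      using tau_pos[of t] by (intro mult_left_mono) auto
    then show ?thesis using tau_pos[of t] by simp
  qed
  have dual: "(\<kappa> t * tau t) *\<^sub>R (D *v (cadj D *v (y - y0)) + \<theta>\<^sup>2 *\<^sub>R (y - y0))
      = D *v a + \<kappa> t *\<^sub>R (D *v (a - a0))"
  proof -
    have "(\<kappa> t * tau t) *\<^sub>R (D *v (cadj D *v (y - y0)) + \<theta>\<^sup>2 *\<^sub>R (y - y0)) = p (Suc t)"
      unfolding \<open>y - y0 = _\<close> tau_step[symmetric] by (rule dual_step)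
    also have "\<dots> = D *v a + \<kappa> t *\<^sub>R (D *v (a - a0))"
      using assms(1) unfolding p_def \<open>a - a0 = _\<close> unfolding kkt_pair_def a_def
      by (simp add: matrix_vector_right_distrib matrix_vector_mult_diff_distrib
          matrix_vector_mult_scaleR_complex)
    finally show ?thesis .
  qed
  have "pd_energy (\<lambda>y. cadj D *v y) \<theta> (\<kappa> t * tau t) a y \<le> (1 + \<epsilon> t) * pd_energy (\<lambda>y. cadj D *v y) \<theta> (tau t) a0 y0
      - pd_energy (\<lambda>y. cadj D *v y) \<theta> (tau t) (a - a0) (y - y0)"
    unfolding \<epsilon>_def energy_const_def
    using pd_energy_descent[OF inner_matrix_vector_mult_cadj matrix_vector_mul_linear norm_cadj_le
        adj_norm_nonneg \<theta>_pos tau_pos \<kappa>_pos mono dual] small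
    unfolding energy_const_def by (simp add: mult.assoc)
  then show ?thesis
    unfolding energy_def residual_def tau_step a0_def a_def y0_def y_def
    by (simp add: \<open>a - a0 = _\<close>[unfolded a0_def a_def] \<open>y - y0 = _\<close>[unfolded y0_def y_def])
qed

lemma eventually_energy_descent:
  assumes "kkt_pair f D b us ls"
  shows "\<forall>\<^sub>F t in sequentially. energy us ls (Suc t) \<le> (1 + \<epsilon> t) * energy us ls t - residual t"
  using eventually_small_perturbation by eventually_elim (rule energy_descent[OF assms])

lemma energy_nonneg: "0 \<le> energy us ls t"
  unfolding energy_def by (rule pd_energy_nonneg)

lemma norm_le_energy:
  "norm y \<le> sqrt (pd_energy (\<lambda>y. cadj D *v y) \<theta> (tau t) x y) / (tau_min * \<theta>)"
  "norm x \<le> sqrt (pd_energy (\<lambda>y. cadj D *v y) \<theta> (tau t) x y)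
     + tau_max * adj_norm * (sqrt (pd_energy (\<lambda>y. cadj D *v y) \<theta> (tau t) x y) / (tau_min * \<theta>))"
  using norm_le_pd_energy[OF norm_cadj_le adj_norm_nonneg tau_bounds tau_min_pos \<theta>_pos] by blast+

lemma residual_nonneg: "0 \<le> residual t"
  unfolding residual_def by (rule pd_energy_nonneg)

lemma tendsto_zero_of_energy:
  assumes "(\<lambda>k. pd_energy (\<lambda>y. cadj D *v y) \<theta> (tau (s k)) (X k) (Y k)) \<longlonglongrightarrow> 0"
  shows "X \<longlonglongrightarrow> 0" "Y \<longlonglongrightarrow> 0"
proof -
  define e where "e k = sqrt (pd_energy (\<lambda>y. cadj D *v y) \<theta> (tau (s k)) (X k) (Y k))" for k
  have e: "e \<longlonglongrightarrow> 0" unfolding e_def using tendsto_real_sqrt[OF assms] by simp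
  show "Y \<longlonglongrightarrow> 0"
  proof (rule Lim_null_comparison)
    show "\<forall>\<^sub>F k in sequentially. norm (Y k) \<le> e k / (tau_min * \<theta>)"
      unfolding e_def using norm_le_energy(1) by simp
  qed (intro tendsto_divide_zero e)
  show "X \<longlonglongrightarrow> 0"
  proof (rule Lim_null_comparison)
    show "\<forall>\<^sub>F k in sequentially. norm (X k) \<le> e k + tau_max * adj_norm * (e k / (tau_min * \<theta>))"
      unfolding e_def using norm_le_energy(2) by simp
  qed (use tendsto_add[OF e tendsto_mult_right_zero[OF tendsto_divide_zero[OF e]]] in simp)
qed

lemma energy_tendsto_zero:
  assumes "X \<longlonglongrightarrow> 0" "Y \<longlonglongrightarrow> 0"
  shows "(\<lambda>k. pd_energy (\<lambda>y. cadj D *v y) \<theta> (tau (s k)) (X k) (Y k)) \<longlonglongrightarrow> 0"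
proof (rule Lim_null_comparison)
  define bnd where "bnd k = (norm (X k) + tau_max * adj_norm * norm (Y k))\<^sup>2 + (tau_max * \<theta>)\<^sup>2 * (norm (Y k))\<^sup>2" for k
  show "\<forall>\<^sub>F k in sequentially. norm (pd_energy (\<lambda>y. cadj D *v y) \<theta> (tau (s k)) (X k) (Y k)) \<le> bnd k"
  proof (rule always_eventually, rule allI)
    fix k
    have "norm (X k - tau (s k) *\<^sub>R (cadj D *v Y k)) \<le> norm (X k) + tau (s k) * norm (cadj D *v Y k)"
      using norm_triangle_ineq4[of "X k" "tau (s k) *\<^sub>R (cadj D *v Y k)"] tau_pos[of "s k"] by simp
    also have "\<dots> \<le> norm (X k) + tau_max * adj_norm * norm (Y k)"
      using tau_bounds(2)[of "s k"] tau_pos[of "s k"] norm_cadj_le[of "Y k"]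
      by (simp add: mult.assoc mult_mono)
    finally have "(norm (X k - tau (s k) *\<^sub>R (cadj D *v Y k)))\<^sup>2 \<le> (norm (X k) + tau_max * adj_norm * norm (Y k))\<^sup>2"
      by (simp add: power_mono)
    moreover have "(tau (s k) * \<theta>)\<^sup>2 \<le> (tau_max * \<theta>)\<^sup>2"
      using tau_bounds(2)[of "s k"] tau_pos[of "s k"] \<theta>_pos by (intro power_mono) auto
    ultimately show "norm (pd_energy (\<lambda>y. cadj D *v y) \<theta> (tau (s k)) (X k) (Y k)) \<le> bnd k"
      unfolding bnd_def pd_energy_def by (simp add: add_mono mult_right_mono)
  qed
  have "(\<lambda>k. norm (X k) + tau_max * adj_norm * norm (Y k)) \<longlonglongrightarrow> 0 + tau_max * adj_norm * 0"
    using assms by (intro tendsto_intros tendsto_norm_zero)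
  from tendsto_power[OF this, of 2]
  have "(\<lambda>k. (norm (X k) + tau_max * adj_norm * norm (Y k))\<^sup>2) \<longlonglongrightarrow> 0" by simp
  moreover have "(\<lambda>k. (norm (Y k))\<^sup>2) \<longlonglongrightarrow> 0"
    using tendsto_power[OF tendsto_norm_zero[OF assms(2)], of 2] by simp
  ultimately have "bnd \<longlonglongrightarrow> 0 + (tau_max * \<theta>)\<^sup>2 * 0"
    unfolding bnd_def by (intro tendsto_add tendsto_mult tendsto_const)
  then show "bnd \<longlonglongrightarrow> 0" by simp
qed

lemma residual_tendsto_zero: "residual \<longlonglongrightarrow> 0"
proof -
  obtain us ls where kkt: "kkt_pair f D b us ls" using KKT by blast
  show ?thesis
    by (rule quasi_fejer_residual_tendsto_zero[OF eventually_energy_descent[OF kkt] _ \<epsilon>_nonneg \<epsilon>_summable])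
      (simp_all add: energy_def residual_def pd_energy_nonneg)
qed

lemma increments_tendsto_zero:
  "(\<lambda>t. u (Suc t) - u t) \<longlonglongrightarrow> 0" "(\<lambda>t. lam (Suc t) - lam t) \<longlonglongrightarrow> 0"
  using tendsto_zero_of_energy[of id] residual_tendsto_zero unfolding residual_def by simp_all

lemma eventually_energy_fejer:
  assumes "kkt_pair f D b us ls"
  shows "\<forall>\<^sub>F t in sequentially. energy us ls (Suc t) \<le> (1 + \<epsilon> t) * energy us ls t"
  using eventually_energy_descent[OF assms]
  by (rule eventually_mono) (use residual_nonneg in \<open>smt (verit)\<close>)

lemma convergent_subsequence:
  obtains r ub lb where "strict_mono r" "(\<lambda>k. u (r k)) \<longlonglongrightarrow> ub" "(\<lambda>k. lam (r k)) \<longlonglongrightarrow> lb"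
proof -
  obtain us ls where kkt: "kkt_pair f D b us ls" using KKT by blast
  have "\<forall>\<^sub>F t in sequentially. energy us ls (Suc t) \<le> (1 + \<epsilon> t) * energy us ls t"
    by (rule eventually_energy_fejer[OF kkt])
  then obtain B where "\<forall>\<^sub>F t in sequentially. energy us ls t \<le> B"
    by (rule quasi_fejer_eventually_bounded[OF _ energy_nonneg \<epsilon>_nonneg \<epsilon>_summable])
  then obtain T where B: "\<And>t. T \<le> t \<Longrightarrow> energy us ls t \<le> B"
    unfolding eventually_sequentially by blast
  define R where "R = sqrt B + tau_max * adj_norm * (sqrt B / (tau_min * \<theta>))"
  have "norm (u t - us) \<le> R" "norm (lam t - ls) \<le> sqrt B / (tau_min * \<theta>)" if "T \<le> t" for t
  proof -
    define e where "e = sqrt (energy us ls t)"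
    have "e \<le> sqrt B" unfolding e_def using B[OF that] by simp
    then have e_div: "e / (tau_min * \<theta>) \<le> sqrt B / (tau_min * \<theta>)"
      using tau_min_pos \<theta>_pos by (simp add: divide_right_mono)
    have "0 \<le> tau_max * adj_norm"
      using tau_bounds(2)[of 0] tau_init adj_norm_nonneg by simp
    then have "tau_max * adj_norm * (e / (tau_min * \<theta>)) \<le> tau_max * adj_norm * (sqrt B / (tau_min * \<theta>))"
      by (rule mult_left_mono[OF e_div])
    moreover have "norm (lam t - ls) \<le> e / (tau_min * \<theta>)"
      "norm (u t - us) \<le> e + tau_max * adj_norm * (e / (tau_min * \<theta>))"
      using norm_le_energy unfolding e_def energy_def by simp_all
    ultimately show "norm (u t - us) \<le> R" "norm (lam t - ls) \<le> sqrt B / (tau_min * \<theta>)"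
      unfolding R_def using \<open>e \<le> sqrt B\<close> e_div by linarith+
  qed
  then have "(u (k + T), lam (k + T)) \<in> cball us R \<times> cball ls (sqrt B / (tau_min * \<theta>))" for k
    by (simp add: dist_norm norm_minus_commute)
  then have "range (\<lambda>k. (u (k + T), lam (k + T))) \<subseteq> cball us R \<times> cball ls (sqrt B / (tau_min * \<theta>))"
    by blast
  then have "bounded (range (\<lambda>k. (u (k + T), lam (k + T))))"
    by (rule bounded_subset[rotated]) (intro bounded_Times bounded_cball)
  then obtain r l where r: "strict_mono r" and l: "((\<lambda>k. (u (k + T), lam (k + T))) \<circ> r) \<longlonglongrightarrow> l"
    using bounded_imp_convergent_subsequence by blast
  have "strict_mono (\<lambda>k. r k + T)" using r by (simp add: strict_mono_def)
  moreover have "(\<lambda>k. u (r k + T)) \<longlonglongrightarrow> fst l" "(\<lambda>k. lam (r k + T)) \<longlonglongrightarrow> snd l"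
    using tendsto_fst[OF l] tendsto_snd[OF l] by (simp_all add: o_def)
  ultimately show ?thesis using that by blast
qed

lemma cluster_point_kkt:
  assumes r: "strict_mono r" and u_lim: "(\<lambda>k. u (r k)) \<longlonglongrightarrow> ub" and lam_lim: "(\<lambda>k. lam (r k)) \<longlonglongrightarrow> lb"
  shows "kkt_pair f D b ub lb"
proof -
  have du: "(\<lambda>k. u (Suc (r k)) - u (r k)) \<longlonglongrightarrow> 0"
    using LIMSEQ_subseq_LIMSEQ[OF increments_tendsto_zero(1) r] by (simp add: o_def)
  then have u_next: "(\<lambda>k. u (Suc (r k))) \<longlonglongrightarrow> ub"
    using tendsto_add[OF u_lim du] by simp
  have "(\<lambda>t. D *v (cadj D *v (lam (Suc t) - lam t)) + \<theta>\<^sup>2 *\<^sub>R (lam (Suc t) - lam t))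
      \<longlonglongrightarrow> D *v (cadj D *v 0) + \<theta>\<^sup>2 *\<^sub>R 0"
    by (intro tendsto_intros increments_tendsto_zero(2)
        bounded_linear.tendsto[OF bounded_linear_matrix_vector_mult])
  then have "(\<lambda>t. p (Suc t)) \<longlonglongrightarrow> 0"
    unfolding dual_step[symmetric] using tau_bounds(2) tau_pos
    by (intro tendsto_scaleR_bounded_zero[where K = tau_max]) (auto simp: less_imp_le)
  then have p_lim: "(\<lambda>k. p (Suc (r k))) \<longlonglongrightarrow> 0"
    using LIMSEQ_subseq_LIMSEQ[OF _ r] by (simp add: o_def)
  have "(\<lambda>k. D *v u (Suc (r k)) + \<kappa> (r k) *\<^sub>R (D *v (u (Suc (r k)) - u (r k))) - b)
      \<longlonglongrightarrow> D *v ub + 0 - b"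
    using \<kappa>_bounds(2) \<kappa>_pos bounded_linear.tendsto_zero[OF bounded_linear_matrix_vector_mult du]
    by (intro tendsto_intros tendsto_scaleR_bounded_zero[where K = \<kappa>_max] u_next
        bounded_linear.tendsto[OF bounded_linear_matrix_vector_mult]) (auto simp: less_imp_le)
  moreover have "p (Suc t) = D *v u (Suc t) + \<kappa> t *\<^sub>R (D *v (u (Suc t) - u t)) - b" for t
    unfolding p_def by (simp add: matrix_vector_right_distrib matrix_vector_mult_scaleR_complex)
  ultimately have "(\<lambda>k. p (Suc (r k))) \<longlonglongrightarrow> D *v ub + 0 - b" by simp
  with p_lim have feasible: "D *v ub = b" using LIMSEQ_unique by fastforce
  have "(\<lambda>k. - ((1 / tau (r k)) *\<^sub>R (u (Suc (r k)) - u (r k))) - cadj D *v lam (r k))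
      \<longlonglongrightarrow> - 0 - cadj D *v lb"
    using tau_bounds(1) tau_min_pos tau_pos
    by (intro tendsto_intros tendsto_scaleR_bounded_zero[where K = "1 / tau_min"] du lam_lim
        bounded_linear.tendsto[OF bounded_linear_matrix_vector_mult])
      (auto simp: less_imp_le frac_le)
  moreover have "- ((1 / tau t) *\<^sub>R (u (Suc t) - u t)) - cadj D *v lam t = (1 / tau t) *\<^sub>R (ut t - u (Suc t))" for t
    unfolding ut_def using tau_pos[of t] by (simp add: algebra_simps)
  ultimately have "(\<lambda>k. (1 / tau (r k)) *\<^sub>R (ut (r k) - u (Suc (r k)))) \<longlonglongrightarrow> - (cadj D *v lb)" by simp
  with u_next have "- (cadj D *v lb) \<in> subdiff f ub"
    by (rule subdiff_closed_graph[OF f_proper f_closed _ _ subgradient_step])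
  with feasible show ?thesis unfolding kkt_pair_def by blast
qed

theorem converges_to_solution:
  "\<exists>ustar. D *v ustar = b \<and> (\<forall>v. D *v v = b \<longrightarrow> f ustar \<le> f v) \<and> u \<longlonglongrightarrow> ustar"
proof -
  obtain r ub lb where r: "strict_mono r" and lim: "(\<lambda>k. u (r k)) \<longlonglongrightarrow> ub" "(\<lambda>k. lam (r k)) \<longlonglongrightarrow> lb"
    by (rule convergent_subsequence)
  have kkt: "kkt_pair f D b ub lb" using cluster_point_kkt[OF r lim] .
  have "(\<lambda>k. energy ub lb (r k)) \<longlonglongrightarrow> 0"
    unfolding energy_def using lim by (intro energy_tendsto_zero) (simp_all add: LIM_zero)
  then have "energy ub lb \<longlonglongrightarrow> 0"
    by (intro quasi_fejer_tendsto_zero_subseq[OF eventually_energy_fejer[OF kkt] energy_nonneg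
        \<epsilon>_nonneg \<epsilon>_summable r])
  then have "(\<lambda>t. u t - ub) \<longlonglongrightarrow> 0"
    unfolding energy_def by (rule tendsto_zero_of_energy[of id, simplified])
  then have "u \<longlonglongrightarrow> ub" by (simp add: LIM_zero_iff)
  with kkt show ?thesis using kkt_pair_optimal unfolding kkt_pair_def by blast
qed

end

theorem theorem1:
  fixes f :: "complex ^ 'n \<Rightarrow> ereal"
    and D :: "complex ^ 'n ^ 'm" and b :: "complex ^ 'm"
    and \<omega> :: "nat \<Rightarrow> real"
    and \<theta> \<eta>l \<eta>u :: real
    and u ut :: "nat \<Rightarrow> complex ^ 'n"
    and lam p :: "nat \<Rightarrow> complex ^ 'm"
    and tau \<eta> \<kappa> :: "nat \<Rightarrow> real"
  assumes f_proper: "proper_fun f" and f_closed: "closed_fun f" and f_convex: "convex_fun f"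
    and KKT: "\<exists>us ls. D *v us = b \<and> - (cadj D *v ls) \<in> subdiff f us"
    and \<omega>_range: "\<And>t. 0 < \<omega> t \<and> \<omega> t \<le> 1"
    and \<omega>0: "\<omega> 0 = 1" and \<omega>_sum: "summable \<omega>"
    and tau_init: "tau 0 > 0"
    and \<theta>_pos: "\<theta> > 0" and \<eta>_bounds: "0 < \<eta>l" "\<eta>l < \<eta>u"
    \<comment> \<open>tau t stands for tau_{t-1}\<close>
    and ut_def: "\<And>t. ut t = u t - tau t *\<^sub>R (cadj D *v lam t)"
    and u_step: "\<And>t. u (Suc t) = prox (tau t) f (ut t)"
    and \<eta>_def: "\<And>t. \<eta> t = proj_ratio \<eta>l \<eta>u (norm (u (Suc t)))
                   (sqrt (norm (u (Suc t) - ut t) ^ 2 + norm ((\<theta> * tau t) *\<^sub>R lam t) ^ 2))"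
    and \<kappa>_def: "\<And>t. \<kappa> t = 1 - \<omega> t + \<omega> t * \<eta> t"
    and tau_step: "\<And>t. tau (Suc t) = \<kappa> t * tau t"
    and p_def: "\<And>t. p (Suc t) = D *v (u (Suc t) + \<kappa> t *\<^sub>R (u (Suc t) - u t)) - b"
    and lam_step: "\<And>t. lam (Suc t) = lam t +
          inverse (tau (Suc t)) *\<^sub>R (matrix_inv (D ** cadj D + of_real (\<theta>^2) *\<^sub>R mat 1) *v p (Suc t))"
  shows "\<exists>ustar. D *v ustar = b \<and> (\<forall>v. D *v v = b \<longrightarrow> f ustar \<le> f v)
                 \<and> u \<longlonglongrightarrow> ustar"
proof -
  txt \<open>Neither \<open>\<omega> 0 = 1\<close> nor the adaptive choice of \<open>\<eta> t\<close> matters for convergence,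
    only \<open>\<eta> t \<in> [\<eta>l, \<eta>u]\<close>.\<close>
  have \<eta>_range: "\<eta>l \<le> \<eta> t \<and> \<eta> t \<le> \<eta>u" for t
    unfolding \<eta>_def proj_ratio_def using \<eta>_bounds by auto
  interpret abal_iteration f D b \<omega> \<theta> \<eta>l \<eta>u u ut lam p tau \<eta> \<kappa>
    by (unfold_locales; (rule assms \<eta>_range)?) (use KKT in \<open>simp add: kkt_pair_def\<close>)
  show ?thesis by (rule converges_to_solution)
qed

end
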